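(* Consider the system $x_{k+1}=A_{\theta_k}x_k+B_{\theta_k}u_k$, $y_k=C_{\theta_k}x_k$ with modes in $W=\{1,\dots,n_\theta\}$. Let $N\in\mathbb{N}_+$, $\bar\theta,\bar\theta'\in W$ and $\theta,\theta'\in W^{N}$, and let $\bar\theta\theta,\bar\theta'\theta'\in W^{N+1}$ denote the concatenations. Then for every $u=(u_0,\dots,u_{N-1})\in\mathbb{R}^{Nn_u}$, $$c(\bar\theta\theta,\bar\theta'\theta',u)\subseteq T_{\bar\theta,u_0}^{-1}\big(c(\theta,\theta',(u_1,\dots,u_{N-1}))\big),$$ where $T_{\bar\theta,u_0}^{-1}(C)$ denotes the preimage of a set $C\subseteq\mathbb{R}^{n_x}$ under the affine map $T_{\bar\theta,u_0}:x\mapsto A_{\bar\theta}x+B_{\bar\theta}u_0$.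
   Context: Here $A_i\in\mathbb{R}^{n_x\times n_x}$, $B_i\in\mathbb{R}^{n_x\times n_u}$, $C_i\in\mathbb{R}^{n_y\times n_x}$. For $\theta=(\theta_0,\dots,\theta_T)\in W^{T+1}$, $x\in\mathbb{R}^{n_x}$, $u=(u_0,\dots,u_{T-1})$, let $Y(\theta,x,u)=(C_{\theta_0}x_0,\dots,C_{\theta_T}x_T)$ with $x_0=x$, $x_{k+1}=A_{\theta_k}x_k+B_{\theta_k}u_k$. For paths $\theta,\theta'\in W^{T+1}$ and $u\in\mathbb{R}^{Tn_u}$, define $c(\theta,\theta',u)=\{x\in\mathbb{R}^{n_x}\mid \exists x'\in\mathbb{R}^{n_x}: Y(\theta,x,u)=Y(\theta',x',u)\}$. *)

theory Defs
  imports "HOL-Analysis.Analysis"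
begin

text \<open>Switched linear system with modes indexed by naturals (W = {1..n_theta}).\<close>

fun sstate :: "(nat \<Rightarrow> real^'nx^'nx) \<Rightarrow> (nat \<Rightarrow> real^'nu^'nx) \<Rightarrow> nat list \<Rightarrow> real^'nx
    \<Rightarrow> (real^'nu) list \<Rightarrow> nat \<Rightarrow> real^'nx" where
  "sstate A B th x u 0 = x"
| "sstate A B th x u (Suc k) = A (th ! k) *v sstate A B th x u k + B (th ! k) *v (u ! k)"

definition Yout :: "(nat \<Rightarrow> real^'nx^'nx) \<Rightarrow> (nat \<Rightarrow> real^'nu^'nx) \<Rightarrow> (nat \<Rightarrow> real^'nx^'ny)
    \<Rightarrow> nat list \<Rightarrow> real^'nx \<Rightarrow> (real^'nu) list \<Rightarrow> (real^'ny) list" where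
  "Yout A B C th x u = map (\<lambda>k. C (th ! k) *v sstate A B th x u k) [0..<length th]"

definition cset :: "(nat \<Rightarrow> real^'nx^'nx) \<Rightarrow> (nat \<Rightarrow> real^'nu^'nx) \<Rightarrow> (nat \<Rightarrow> real^'nx^'ny)
    \<Rightarrow> nat list \<Rightarrow> nat list \<Rightarrow> (real^'nu) list \<Rightarrow> (real^'nx) set" where
  "cset A B C th th' u = {x. \<exists>x'. Yout A B C th x u = Yout A B C th' x' u}"

end

theory Submission
  imports Defs
begin

text \<open>Running the system one step along the first mode and input turns the trajectory of the
  concatenated path from \<open>x\<close> into the trajectory of the tail path from \<open>A\<^sub>t x + B\<^sub>t u\<^sub>0\<close>.
  Hence if two concatenated paths produce equal outputs, dropping the first output shows that
  the tail paths produce equal outputs from the two propagated initial states.\<close>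

lemma sstate_Cons_Suc:
  "sstate A B (t # th) x (v # us) (Suc k) = sstate A B th (A t *v x + B t *v v) us k"
  by (induction k) auto

lemma Yout_Cons:
  "Yout A B C (t # th) x (v # us) = C t *v x # Yout A B C th (A t *v x + B t *v v) us"
proof -
  have "[0..<length (t # th)] = 0 # map Suc [0..<length th]"
    by (simp add: map_Suc_upt upt_conv_Cons del: upt_Suc)
  then show ?thesis
    unfolding Yout_def by (simp add: sstate_Cons_Suc del: upt_Suc sstate.simps(2))
qed

lemma cset_Cons_subset_vimage:
  "cset A B C (t # th) (t' # th') (v # us)
     \<subseteq> (\<lambda>x. A t *v x + B t *v v) -` cset A B C th th' us"
proof
  fix x assume "x \<in> cset A B C (t # th) (t' # th') (v # us)"
  then obtain x' where "Yout A B C (t # th) x (v # us) = Yout A B C (t' # th') x' (v # us)"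
    unfolding cset_def by blast
  then have "Yout A B C th (A t *v x + B t *v v) us = Yout A B C th' (A t' *v x' + B t' *v v) us"
    unfolding Yout_Cons by simp
  then show "x \<in> (\<lambda>x. A t *v x + B t *v v) -` cset A B C th th' us"
    unfolding cset_def by blast
qed

theorem lemma5:
  fixes A :: "nat \<Rightarrow> real^'nx^'nx" and B :: "nat \<Rightarrow> real^'nu^'nx"
    and C :: "nat \<Rightarrow> real^'nx^'ny"
    and ntheta N tb tb' :: nat and th th' :: "nat list" and u :: "(real^'nu) list"
  assumes "N \<ge> 1"
    and "tb \<in> {1..ntheta}" and "tb' \<in> {1..ntheta}"
    and "length th = N" and "set th \<subseteq> {1..ntheta}"
    and "length th' = N" and "set th' \<subseteq> {1..ntheta}"
    and "length u = N"
  shows "cset A B C (tb # th) (tb' # th') u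
           \<subseteq> (\<lambda>x. A tb *v x + B tb *v (u ! 0)) -` cset A B C th th' (tl u)"
proof -
  obtain v us where "u = v # us"
    using \<open>N \<ge> 1\<close> \<open>length u = N\<close> by (cases u) auto
  then show ?thesis
    using cset_Cons_subset_vimage by simp
qed

end
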